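(* For any $a,b\ge0$, $$\lim_{n\to\infty}\Biggl(\sum_{i=0}^{\lfloor n/2\rfloor}\binom nia^ib^{n-i}\Biggr)^{1/n}=\begin{cases}a+b&\text{if }a\le b,\\ 2\sqrt{ab}&\text{if }a\ge b.\end{cases}$$
   Context: The convention $0^0=1$ is used in the terms $a^ib^{n-i}$. *)

theory Defs
  imports "HOL-Analysis.Analysis"
begin

end

theory Submission
  imports Defs
begin

text \<open>
  Both limits come from squeezing the sum between \<open>c L^n / n\<close> and \<open>L^n\<close>, as
  \<open>root n (c / n) \<longlonglongrightarrow> 1\<close>. For \<open>a \<le> b\<close> the terms with \<open>i > n/2\<close> are dominated by their
  mirror images \<open>i \<mapsto> n - i\<close>, so the truncated sum is at least half of \<open>(a + b)^n\<close>.
  For \<open>a > b\<close> every term \<open>a^i b^(n-i)\<close> with \<open>i \<le> n/2\<close> is at most \<open>sqrt(ab)^n\<close>, which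
  bounds the sum by \<open>(2 sqrt(ab))^n\<close>, while the central term alone is at least
  \<open>2^n / (n + 1) \<cdot> b / sqrt(ab) \<cdot> sqrt(ab)^n\<close>, its binomial coefficient being the largest one.
\<close>

lemma LIMSEQ_root_squeeze:
  fixes S :: "nat \<Rightarrow> real"
  assumes "L \<ge> 0" and "c > 0"
    and lower: "\<And>n. n \<ge> 1 \<Longrightarrow> c * L ^ n / real n \<le> S n"
    and upper: "\<And>n. n \<ge> 1 \<Longrightarrow> S n \<le> L ^ n"
  shows "(\<lambda>n. root n (S n)) \<longlonglongrightarrow> L"
proof (rule tendsto_sandwich)
  have "(\<lambda>n. root n c * L / root n (real n)) \<longlonglongrightarrow> 1 * L / 1"
    by (intro tendsto_intros LIMSEQ_root_const LIMSEQ_root) (use \<open>c > 0\<close> in auto)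
  then show "(\<lambda>n. root n c * L / root n (real n)) \<longlonglongrightarrow> L"
    by simp
  show "\<forall>\<^sub>F n in sequentially. root n c * L / root n (real n) \<le> root n (S n)"
    unfolding eventually_sequentially
  proof (intro exI allI impI)
    fix n :: nat
    assume "n \<ge> 1"
    have "root n c * L / root n (real n) = root n (c * L ^ n / real n)"
      using \<open>n \<ge> 1\<close> \<open>L \<ge> 0\<close> by (simp add: real_root_mult real_root_divide real_root_power_cancel)
    also have "\<dots> \<le> root n (S n)"
      using lower \<open>n \<ge> 1\<close> by (simp add: real_root_le_iff)
    finally show "root n c * L / root n (real n) \<le> root n (S n)" .
  qed
  show "\<forall>\<^sub>F n in sequentially. root n (S n) \<le> L"
    unfolding eventually_sequentially
  proof (intro exI allI impI)
    fix n :: nat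
    assume "n \<ge> 1"
    have "root n (S n) \<le> root n (L ^ n)"
      using upper \<open>n \<ge> 1\<close> by (simp add: real_root_le_iff)
    then show "root n (S n) \<le> L"
      using \<open>n \<ge> 1\<close> \<open>L \<ge> 0\<close> by (simp add: real_root_power_cancel)
  qed
  show "(\<lambda>n. L) \<longlonglongrightarrow> L"
    by simp
qed

lemma two_power_le_central_binomial: "2 ^ n \<le> Suc n * (n choose (n div 2))"
proof -
  have "2 ^ n = (\<Sum>k\<le>n. n choose k)"
    by (simp add: choose_row_sum)
  also have "\<dots> \<le> (\<Sum>k\<le>n. n choose (n div 2))"
    by (intro sum_mono binomial_maximum)
  finally show ?thesis
    by simp
qed

definition half_binomial_sum :: "nat \<Rightarrow> real \<Rightarrow> real \<Rightarrow> real" where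
  "half_binomial_sum n a b = (\<Sum>i=0..n div 2. real (n choose i) * a ^ i * b ^ (n - i))"

lemma half_binomial_sum_nonneg: "a \<ge> 0 \<Longrightarrow> b \<ge> 0 \<Longrightarrow> half_binomial_sum n a b \<ge> 0"
  unfolding half_binomial_sum_def by (intro sum_nonneg) auto

lemma binomial_sum_split_half:
  fixes a b :: real
  shows "(a + b) ^ n = half_binomial_sum n a b
           + (\<Sum>i\<in>{n div 2<..n}. real (n choose i) * a ^ i * b ^ (n - i))"
proof -
  have "{..n} = {0..n div 2} \<union> {n div 2<..n}"
    by auto
  then show ?thesis
    unfolding half_binomial_sum_def binomial_ring
    by (simp only:) (subst sum.union_disjoint, auto simp: mult_ac)
qed

lemma half_binomial_sum_le_binomial_power:
  "a \<ge> 0 \<Longrightarrow> b \<ge> 0 \<Longrightarrow> half_binomial_sum n a b \<le> (a + b) ^ n"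
  unfolding binomial_sum_split_half[of a b n] by (auto intro!: sum_nonneg)

lemma binomial_term_le_mirror:
  fixes a b :: real
  assumes "0 \<le> a" "a \<le> b" and "n - k \<le> k" "k \<le> n"
  shows "real (n choose k) * a ^ k * b ^ (n - k) \<le> real (n choose (n - k)) * a ^ (n - k) * b ^ k"
proof -
  define d where "d = k - (n - k)"
  have "a ^ k * b ^ (n - k) = (a ^ (n - k) * b ^ (n - k)) * a ^ d"
    using assms(3) by (simp add: d_def mult_ac flip: power_add)
  also have "\<dots> \<le> (a ^ (n - k) * b ^ (n - k)) * b ^ d"
    using assms(1,2) by (intro mult_left_mono power_mono) auto
  also have "\<dots> = a ^ (n - k) * b ^ k"
    using assms(3) by (simp add: d_def mult_ac flip: power_add)
  finally show ?thesis
    using binomial_symmetric[OF \<open>k \<le> n\<close>] by (simp add: mult.assoc mult_left_mono)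
qed

lemma binomial_power_le_twice_half_binomial_sum:
  fixes a b :: real
  assumes "0 \<le> a" "a \<le> b"
  shows "(a + b) ^ n \<le> 2 * half_binomial_sum n a b"
proof -
  let ?f = "\<lambda>i. real (n choose i) * a ^ i * b ^ (n - i)"
  have "(\<Sum>i\<in>{n div 2<..n}. ?f i) \<le> (\<Sum>i\<in>{n div 2<..n}. ?f (n - i))"
  proof (rule sum_mono)
    fix i
    assume "i \<in> {n div 2<..n}"
    then have "n - i \<le> i" "i \<le> n"
      by auto
    then show "?f i \<le> ?f (n - i)"
      using binomial_term_le_mirror[OF assms] by simp
  qed
  also have "\<dots> = (\<Sum>i\<in>{0..<n - n div 2}. ?f i)"
    by (rule sum.reindex_bij_witness[of _ "\<lambda>j. n - j" "\<lambda>i. n - i"]) auto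
  also have "\<dots> \<le> half_binomial_sum n a b"
    unfolding half_binomial_sum_def using assms by (intro sum_mono2) auto
  finally show ?thesis
    unfolding binomial_sum_split_half[of a b n] by simp
qed

lemma le_sqrt_mult:
  fixes a b :: real
  assumes "0 \<le> b" "b \<le> a"
  shows "b \<le> sqrt (a * b)"
  using assms by (intro real_le_rsqrt) (simp add: power2_eq_square mult_right_mono)

lemma half_binomial_term_eq:
  fixes a b :: real
  assumes "0 \<le> a" "0 \<le> b" and "i \<le> n div 2"
  shows "a ^ i * b ^ (n - i) = sqrt (a * b) ^ (2 * i) * b ^ (n - 2 * i)"
proof -
  have "n - i = i + (n - 2 * i)"
    using assms(3) by auto
  then have "a ^ i * b ^ (n - i) = (a * b) ^ i * b ^ (n - 2 * i)"
    by (simp only: power_add power_mult_distrib mult.assoc)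
  then show ?thesis
    using assms(1,2) by (simp add: power_mult)
qed

lemma half_binomial_sum_le_sqrt_power:
  fixes a b :: real
  assumes "0 \<le> b" "b \<le> a"
  shows "half_binomial_sum n a b \<le> (2 * sqrt (a * b)) ^ n"
proof -
  let ?s = "sqrt (a * b)"
  have "b \<le> ?s"
    using assms by (rule le_sqrt_mult)
  have term_le: "a ^ i * b ^ (n - i) \<le> ?s ^ n" if "i \<le> n div 2" for i
  proof -
    have "a ^ i * b ^ (n - i) \<le> ?s ^ (2 * i) * ?s ^ (n - 2 * i)"
      using half_binomial_term_eq[OF _ _ that] assms \<open>b \<le> ?s\<close>
      by (simp add: mult_left_mono power_mono)
    also have "\<dots> = ?s ^ n"
      using that by (simp flip: power_add)
    finally show ?thesis .
  qed
  have "half_binomial_sum n a b \<le> (\<Sum>i=0..n div 2. real (n choose i) * ?s ^ n)"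
    unfolding half_binomial_sum_def using term_le
    by (intro sum_mono) (simp add: mult.assoc mult_left_mono)
  also have "\<dots> \<le> (\<Sum>i\<le>n. real (n choose i) * ?s ^ n)"
    using assms by (intro sum_mono2) auto
  also have "\<dots> = (2 * ?s) ^ n"
    by (simp add: power_mult_distrib choose_row_sum flip: sum_distrib_right of_nat_sum)
  finally show ?thesis .
qed

lemma central_binomial_term_ge:
  fixes a b :: real
  assumes "0 < b" "b \<le> a"
  shows "b / sqrt (a * b) * sqrt (a * b) ^ n \<le> a ^ (n div 2) * b ^ (n - n div 2)"
proof -
  define s where "s = sqrt (a * b)"
  have "s > 0" and "b \<le> s"
    unfolding s_def using assms le_sqrt_mult[of b a] by auto
  have "b / s * s ^ n \<le> s ^ (2 * (n div 2)) * b ^ (n - 2 * (n div 2))"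
  proof (cases "even n")
    case True
    then obtain m where n: "n = 2 * m"
      by blast
    have "b / s * s ^ (2 * m) \<le> 1 * s ^ (2 * m)"
      using \<open>s > 0\<close> \<open>b \<le> s\<close> by (intro mult_right_mono) simp_all
    then show ?thesis
      unfolding n by simp
  next
    case False
    then obtain m where n: "n = Suc (2 * m)"
      by (elim oddE) simp
    have "b / s * s ^ Suc (2 * m) = s ^ (2 * m) * b"
      using \<open>s > 0\<close> by simp
    then show ?thesis
      unfolding n by simp
  qed
  also have "\<dots> = a ^ (n div 2) * b ^ (n - n div 2)"
    unfolding s_def using assms by (intro half_binomial_term_eq[symmetric]) auto
  finally show ?thesis
    unfolding s_def .
qed

lemma half_binomial_sum_ge_sqrt_power:
  fixes a b :: real
  assumes "0 < b" "b \<le> a" and "n \<ge> 1"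
  shows "b / (2 * sqrt (a * b)) * (2 * sqrt (a * b)) ^ n / real n \<le> half_binomial_sum n a b"
proof -
  define s where "s = sqrt (a * b)"
  have "s > 0"
    unfolding s_def using assms by simp
  have "2 ^ n \<le> real (Suc n) * real (n choose (n div 2))"
    using two_power_le_central_binomial[of n] by (metis of_nat_le_iff of_nat_mult of_nat_numeral of_nat_power)
  also have "\<dots> \<le> 2 * real n * real (n choose (n div 2))"
    using \<open>n \<ge> 1\<close> by (intro mult_right_mono) auto
  finally have binom: "2 ^ n / (2 * real n) \<le> real (n choose (n div 2))"
    using \<open>n \<ge> 1\<close> by (simp add: divide_le_eq mult_ac)
  have "b / (2 * s) * (2 * s) ^ n / real n = 2 ^ n / (2 * real n) * (b / s * s ^ n)"
    by (simp add: power_mult_distrib mult_ac)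
  also have "\<dots> \<le> real (n choose (n div 2)) * (a ^ (n div 2) * b ^ (n - n div 2))"
    unfolding s_def using assms \<open>s > 0\<close>
    by (intro mult_mono binom central_binomial_term_ge) (auto simp: s_def)
  also have "\<dots> = real (n choose (n div 2)) * a ^ (n div 2) * b ^ (n - n div 2)"
    by (simp only: mult.assoc)
  also have "\<dots> \<le> half_binomial_sum n a b"
    unfolding half_binomial_sum_def using assms by (intro member_le_sum) auto
  finally show ?thesis
    unfolding s_def .
qed

lemma root_half_binomial_sum_tendsto_sum:
  fixes a b :: real
  assumes "0 \<le> a" "a \<le> b"
  shows "(\<lambda>n. root n (half_binomial_sum n a b)) \<longlonglongrightarrow> a + b"
proof (rule LIMSEQ_root_squeeze[where c = "1/2"])
  fix n :: nat
  assume "n \<ge> 1"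
  have "(a + b) ^ n / real n \<le> (a + b) ^ n"
    using \<open>n \<ge> 1\<close> assms by (simp add: divide_le_eq mult_le_cancel_left1)
  then show "1/2 * (a + b) ^ n / real n \<le> half_binomial_sum n a b"
    using binomial_power_le_twice_half_binomial_sum[OF assms, of n] by simp
qed (use assms half_binomial_sum_le_binomial_power in auto)

lemma root_half_binomial_sum_tendsto_sqrt:
  fixes a b :: real
  assumes "0 \<le> b" "b \<le> a"
  shows "(\<lambda>n. root n (half_binomial_sum n a b)) \<longlonglongrightarrow> 2 * sqrt (a * b)"
proof (cases "b = 0")
  case True
  show ?thesis
  proof (rule LIMSEQ_root_squeeze[where c = 1])
    fix n :: nat
    assume "n \<ge> 1"
    then show "1 * (2 * sqrt (a * b)) ^ n / real n \<le> half_binomial_sum n a b"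
      using True assms half_binomial_sum_nonneg[of a b n] by (simp add: power_0_left)
    show "half_binomial_sum n a b \<le> (2 * sqrt (a * b)) ^ n"
      using assms by (rule half_binomial_sum_le_sqrt_power)
  qed (use assms in auto)
next
  case False
  then show ?thesis
    using assms
    by (intro LIMSEQ_root_squeeze[where c = "b / (2 * sqrt (a * b))"]
        half_binomial_sum_ge_sqrt_power half_binomial_sum_le_sqrt_power) auto
qed

theorem lemmaA5:
  fixes a b :: real
  assumes "a \<ge> 0" and "b \<ge> 0"
  shows "(\<lambda>n. root n (\<Sum>i=0..n div 2. real (n choose i) * a ^ i * b ^ (n - i)))
           \<longlonglongrightarrow> (if a \<le> b then a + b else 2 * sqrt (a * b))"
  unfolding half_binomial_sum_def[symmetric]
  using assms root_half_binomial_sum_tendsto_sum root_half_binomial_sum_tendsto_sqrt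
  by auto

end
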